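(* Let $\mathrm{SNR}>0$ and let $z_1, z_2, \ldots$ be i.i.d. nonnegative random variables (the squared magnitudes $z_i=|h_i|^2$ of block-fading channel coefficients). Fix a transmission rate $R>0$ (bit/s/Hz) and define the random transmission time of a message under HARQ with incremental redundancy as $$T=\min\Big\{M\ge 1: R<\sum_{i=1}^{M}\log_2(1+\mathrm{SNR}\, z_i)\Big\}.$$ Let $T_1,T_2,\ldots$ be i.i.d. copies of $T$ (the durations of successful transmissions of consecutive messages), let $N_t=\max\{k: \sum_{l=1}^{k}T_l<t\}$ be the associated renewal counting process, and for $\theta>0$ define the effective capacity $$C_e(\theta)=-\lim_{t\to\infty}\frac{1}{\theta t}\log_e \mathbb{E}\{e^{-\theta R N_t}\}.$$ Let $\mu_1=\mathbb{E}\{T\}$ and $\sigma^2=\mathrm{var}(T)$ (both depending on $R$). Then, as $\theta\to 0$, $$C_e(\theta)=\frac{R}{\mu_1}-\frac{R^2\sigma^2}{2\mu_1^3}\,\theta+o(\theta),$$ where $o(\theta)$ denotes terms with $\lim_{\theta\to 0} o(\theta)/\theta=0$.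
   Context: The model is the block-fading channel $\mathbf{y}_i=h_i\mathbf{x}_i+\mathbf{n}_i$ with instantaneous capacity $C_i=\log_2(1+\mathrm{SNR}\,z_i)$ in block $i$. In HARQ-IR the receiver accumulates mutual information over blocks and decodes a message at the end of block $M$ exactly when $R<\sum_{i=1}^M C_i$; then a new message starts. $\theta$ is the QoS exponent (decay rate of the buffer overflow probability), and $S_t=RN_t$ is the number of bits served by time $t$. *)

theory Defs
  imports "HOL-Probability.Probability"
begin

definition blockcap :: "real \<Rightarrow> real \<Rightarrow> real" where
  "blockcap SNR zi = log 2 (1 + SNR * zi)"

definition harq_time :: "real \<Rightarrow> real \<Rightarrow> (nat \<Rightarrow> 'a \<Rightarrow> real) \<Rightarrow> 'a \<Rightarrow> nat" where
  "harq_time SNR R z \<omega> =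
     (LEAST M. M \<ge> 1 \<and> R < (\<Sum>i=1..M. blockcap SNR (z i \<omega>)))"

definition renewal_count :: "(nat \<Rightarrow> 'a \<Rightarrow> nat) \<Rightarrow> real \<Rightarrow> 'a \<Rightarrow> nat" where
  "renewal_count Tl t \<omega> = (GREATEST k. real (\<Sum>l=1..k. Tl l \<omega>) < t)"

end

theory Submission
  imports Defs "HOL-Real_Asymp.Real_Asymp"
begin

(* Conditioning on the first renewal gives a linear recursion for E[exp (-s N)] in t, from which
   E[exp (-s N)] decays like exp (-\<lambda> t), where \<lambda> = \<lambda>(s) solves E[exp (\<lambda> T)] = exp s; this
   needs finite exponential moments of T, which follow from a Chernoff bound on the partial sums
   of the block capacities.  Hence C_e(\<theta>) = \<lambda>(\<theta> R) / \<theta>, and inverting the Taylor expansion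
   E[exp (\<lambda> T)] = 1 + \<mu>\<^sub>1 \<lambda> + E[T\<^sup>2] \<lambda>\<^sup>2 / 2 + O(\<lambda>\<^sup>3) gives
   \<lambda>(s) = s / \<mu>\<^sub>1 - \<sigma>\<^sup>2 s\<^sup>2 / (2 \<mu>\<^sub>1\<^sup>3) + o(s\<^sup>2). *)

section \<open>The Laplace transform of a discrete renewal count\<close>

(* conv_cdf p k m = P(T\<^sub>1 + ... + T\<^sub>k \<le> m) for i.i.d. T\<^sub>l with distribution p. *)
fun conv_cdf :: "(nat \<Rightarrow> real) \<Rightarrow> nat \<Rightarrow> nat \<Rightarrow> real" where
  "conv_cdf p 0 m = 1"
| "conv_cdf p (Suc k) m = (\<Sum>j\<le>m. p j * conv_cdf p k (m - j))"

definition pmf_tail :: "(nat \<Rightarrow> real) \<Rightarrow> nat \<Rightarrow> real" where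
  "pmf_tail p m = 1 - (\<Sum>j\<le>m. p j)"

(* E[exp (-s N)] for N = max {k. T\<^sub>1 + ... + T\<^sub>k \<le> m}, as P(N = k) = conv_cdf p k m - conv_cdf p (k + 1) m. *)
definition renewal_laplace :: "(nat \<Rightarrow> real) \<Rightarrow> real \<Rightarrow> nat \<Rightarrow> real" where
  "renewal_laplace p s m = (\<Sum>k\<le>m. exp (- s * real k) * (conv_cdf p k m - conv_cdf p (Suc k) m))"

definition pmf_mgf :: "(nat \<Rightarrow> real) \<Rightarrow> real \<Rightarrow> real" where
  "pmf_mgf p l = (\<Sum>n. p n * exp (l * real n))"

lemma sum_atMost_eq_head_plus_atLeast1: "(\<Sum>j\<le>(m::nat). f j) = f 0 + (\<Sum>j=1..m. f j)"
proof -
  have "{..m} = insert 0 {1..m}" by auto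
  then show ?thesis by simp
qed

lemma conv_cdf_eq_0:
  assumes "p 0 = 0" and "m < k"
  shows "conv_cdf p k m = 0"
  using assms(2)
proof (induction k arbitrary: m)
  case (Suc k)
  have "p j * conv_cdf p k (m - j) = 0" if "j \<le> m" for j
    using Suc that assms(1) by (cases "j = 0") auto
  then show ?case by (auto intro!: sum.neutral)
qed simp

(* Conditioning on the first renewal time T\<^sub>1 = j. *)
lemma renewal_laplace_rec:
  assumes p0: "p 0 = 0"
  shows "renewal_laplace p s m = pmf_tail p m + exp (- s) * (\<Sum>j=1..m. p j * renewal_laplace p s (m - j))"
proof -
  define D where "D k i = conv_cdf p k i - conv_cdf p (Suc k) i" for k i
  have D_Suc: "D (Suc k) i = (\<Sum>j\<le>i. p j * D k (i - j))" for k i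
    by (simp add: D_def right_diff_distrib sum_subtractf)
  have D_eq_0: "D k i = 0" if "i < k" for k i
    using that conv_cdf_eq_0[where p=p, OF p0] by (simp add: D_def)
  have laplace_D: "renewal_laplace p s i = (\<Sum>k\<le>m. exp (- s * real k) * D k i)" if "i \<le> m" for i
    unfolding renewal_laplace_def D_def[symmetric]
    by (rule sum.mono_neutral_left) (use that D_eq_0 in auto)
  have exp_Suc: "exp (- s * real (Suc k)) = exp (- s) * exp (- s * real k)" for k
    by (simp add: exp_add[symmetric] algebra_simps)
  have "renewal_laplace p s m = (\<Sum>k\<le>Suc m. exp (- s * real k) * D k m)"
    unfolding renewal_laplace_def D_def[symmetric] using D_eq_0 by simp
  also have "\<dots> = D 0 m + (\<Sum>k\<le>m. exp (- s) * (exp (- s * real k) * (\<Sum>j\<le>m. p j * D k (m - j))))"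
    unfolding sum.atMost_Suc_shift D_Suc exp_Suc by (simp add: mult.assoc)
  also have "(\<Sum>k\<le>m. exp (- s) * (exp (- s * real k) * (\<Sum>j\<le>m. p j * D k (m - j))))
      = exp (- s) * (\<Sum>k\<le>m. \<Sum>j\<le>m. p j * (exp (- s * real k) * D k (m - j)))"
    by (simp only: sum_distrib_left mult.left_commute)
  also have "\<dots> = exp (- s) * (\<Sum>j\<le>m. p j * (\<Sum>k\<le>m. exp (- s * real k) * D k (m - j)))"
    by (subst sum.swap) (simp only: sum_distrib_left)
  also have "\<dots> = exp (- s) * (\<Sum>j=1..m. p j * renewal_laplace p s (m - j))"
    by (simp add: sum_atMost_eq_head_plus_atLeast1[of _ m] p0 laplace_D)
  finally show ?thesis by (simp add: D_def pmf_tail_def)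
qed

locale renewal_pmf =
  fixes p :: "nat \<Rightarrow> real"
  assumes p_0: "p 0 = 0" and p_nonneg: "\<And>n. 0 \<le> p n" and p_sums: "p sums 1"
begin

lemma summable_p: "summable p"
  using p_sums by (simp add: sums_iff)

lemma pmf_tail_eq_suminf: "pmf_tail p m = (\<Sum>n. p (n + Suc m))"
proof -
  from suminf_split_initial_segment[OF summable_p, of "Suc m"] show ?thesis
    using p_sums by (simp add: pmf_tail_def sums_iff lessThan_Suc_atMost)
qed

lemma pmf_tail_nonneg: "0 \<le> pmf_tail p m"
  unfolding pmf_tail_eq_suminf using p_nonneg
  by (intro suminf_nonneg summable_ignore_initial_segment[OF summable_p])

lemma sum_pmf_eq_1_minus_tail: "(\<Sum>j=1..m. p j) = 1 - pmf_tail p m"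
  by (simp add: pmf_tail_def sum_atMost_eq_head_plus_atLeast1[of p m] p_0)

lemma renewal_laplace_rec_weighted:
  "renewal_laplace p s m * exp (l * real m) = pmf_tail p m * exp (l * real m)
     + exp (- s) * (\<Sum>j=1..m. p j * exp (l * real j) * (renewal_laplace p s (m - j) * exp (l * real (m - j))))"
proof -
  have term_eq: "p j * exp (l * real j) * (renewal_laplace p s (m - j) * exp (l * real (m - j)))
      = p j * renewal_laplace p s (m - j) * exp (l * real m)" if "j \<in> {1..m}" for j
  proof -
    have "exp (l * real j) * exp (l * real (m - j)) = exp (l * real m)"
      using that by (simp add: exp_add[symmetric] of_nat_diff algebra_simps)
    then show ?thesis by (metis mult.assoc mult.left_commute)
  qed
  have "(\<Sum>j=1..m. p j * exp (l * real j) * (renewal_laplace p s (m - j) * exp (l * real (m - j))))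
      = (\<Sum>j=1..m. p j * renewal_laplace p s (m - j)) * exp (l * real m)"
    unfolding sum_distrib_right by (rule sum.cong[OF refl term_eq])
  then show ?thesis
    by (simp add: renewal_laplace_rec[where p=p, OF p_0, of s m] algebra_simps)
qed

lemma renewal_laplace_ge_exp:
  assumes "0 \<le> s"
  shows "exp (- s * real m) \<le> renewal_laplace p s m"
proof -
  define u where "u m = renewal_laplace p s m * exp (s * real m)" for m
  have "1 \<le> u m"
  proof (induction m rule: less_induct)
    case (less m)
    have term_ge: "p j \<le> exp (- s) * (p j * exp (s * real j) * u (m - j))" if "j \<in> {1..m}" for j
    proof -
      have "1 \<le> exp (- s) * exp (s * real j)"
        using that assms by (simp add: exp_add[symmetric] algebra_simps mult_le_cancel_left1)
      also have "\<dots> \<le> exp (- s) * exp (s * real j) * u (m - j)"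
        using mult_left_mono[of 1 "u (m - j)" "exp (- s) * exp (s * real j)"] less.IH[of "m - j"] that
        by simp
      finally show ?thesis
        using p_nonneg[of j] mult_left_mono by (fastforce simp: ac_simps)
    qed
    have "1 = pmf_tail p m + (\<Sum>j=1..m. p j)" using sum_pmf_eq_1_minus_tail[of m] by linarith
    also have "\<dots> \<le> pmf_tail p m * exp (s * real m) + (\<Sum>j=1..m. exp (- s) * (p j * exp (s * real j) * u (m - j)))"
      using pmf_tail_nonneg[of m] assms term_ge by (intro add_mono sum_mono mult_le_cancel_left1[THEN iffD2]) auto
    also have "\<dots> = u m"
      by (simp add: u_def renewal_laplace_rec_weighted[of s m s] sum_distrib_left)
    finally show ?case .
  qed
  then show ?thesis by (simp add: u_def exp_minus field_simps)
qed

lemma renewal_laplace_pos: "0 \<le> s \<Longrightarrow> 0 < renewal_laplace p s m"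
  using renewal_laplace_ge_exp[of s m] by (meson exp_gt_zero less_le_trans)

lemma renewal_laplace_le_exp:
  assumes l: "0 \<le> l" and summable: "summable (\<lambda>n. p n * exp (l * real n))"
    and mgf: "pmf_mgf p l \<le> exp s"
  shows "renewal_laplace p s m \<le> exp s * exp (- l * real m)"
proof -
  define f where "f n = p n * exp (l * real n)" for n
  define u where "u m = renewal_laplace p s m * exp (l * real m)" for m
  have f_nonneg: "0 \<le> f n" for n using p_nonneg[of n] by (simp add: f_def)
  have tail_le: "pmf_tail p m * exp (l * real m) \<le> (\<Sum>n. f (n + Suc m))" for m
  proof -
    have "pmf_tail p m * exp (l * real m) = (\<Sum>n. p (n + Suc m) * exp (l * real m))"
      unfolding pmf_tail_eq_suminf
      by (rule suminf_mult2[OF summable_ignore_initial_segment[OF summable_p]])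
    also have "\<dots> \<le> (\<Sum>n. f (n + Suc m))"
      using p_nonneg l unfolding f_def
      by (intro suminf_le summable_mult2 summable_ignore_initial_segment[OF summable_p]
          summable_ignore_initial_segment[OF summable]) (auto intro!: mult_left_mono)
    finally show ?thesis .
  qed
  have mgf_split: "(\<Sum>j=1..m. f j) + (\<Sum>n. f (n + Suc m)) = pmf_mgf p l" for m
    using suminf_split_initial_segment[OF summable, of "Suc m"]
    by (simp add: pmf_mgf_def f_def lessThan_Suc_atMost sum_atMost_eq_head_plus_atLeast1[of _ m] p_0)
  have "u m \<le> exp s"
  proof (induction m rule: less_induct)
    case (less m)
    have "exp (- s) * (\<Sum>j=1..m. f j * u (m - j)) \<le> exp (- s) * (\<Sum>j=1..m. f j * exp s)"
      using less.IH f_nonneg by (intro mult_left_mono sum_mono) auto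
    also have "\<dots> = (\<Sum>j=1..m. f j)"
      by (simp add: sum_distrib_right[symmetric] exp_minus)
    finally have "u m \<le> pmf_tail p m * exp (l * real m) + (\<Sum>j=1..m. f j)"
      by (simp add: u_def f_def renewal_laplace_rec_weighted[of s m l])
    also have "\<dots> \<le> exp s"
      using tail_le[of m] mgf_split[of m] mgf by linarith
    finally show ?case .
  qed
  then show ?thesis by (simp add: u_def exp_minus field_simps)
qed

lemma renewal_laplace_ge_const_exp:
  assumes s: "0 \<le> s" and summable: "summable (\<lambda>n. p n * exp (l * real n))"
    and mgf: "exp s < pmf_mgf p l"
  shows "\<exists>c>0. \<forall>m. c * exp (- l * real m) \<le> renewal_laplace p s m"
proof -
  define f where "f n = p n * exp (l * real n)" for n
  define u where "u m = renewal_laplace p s m * exp (l * real m)" for m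
  have f_nonneg: "0 \<le> f n" for n using p_nonneg[of n] by (simp add: f_def)
  have "(\<lambda>J. \<Sum>j<J. f j) \<longlonglongrightarrow> pmf_mgf p l"
    using summable unfolding pmf_mgf_def f_def by (simp add: summable_LIMSEQ)
  from order_tendstoD(1)[OF this mgf] obtain J where J: "exp s < (\<Sum>j<J. f j)"
    by (auto simp: eventually_sequentially)
  define c where "c = Min (u ` {..J})"
  have c_pos: "0 < c"
    unfolding c_def u_def using renewal_laplace_pos[OF s] by (subst Min_gr_iff) auto
  have "c \<le> u m" for m
  proof (induction m rule: less_induct)
    case (less m)
    show ?case
    proof (cases "m \<le> J")
      case True
      then show ?thesis unfolding c_def by (intro Min_le) auto
    next
      case False
      have "c * exp s \<le> c * (\<Sum>j<J. f j)" using J c_pos by simp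
      also have "\<dots> \<le> c * (\<Sum>j\<le>m. f j)"
        using False f_nonneg c_pos by (intro mult_left_mono sum_mono2) auto
      also have "\<dots> = (\<Sum>j=1..m. f j * c)"
        by (simp only: sum_atMost_eq_head_plus_atLeast1[of f m]) (simp add: f_def p_0 sum_distrib_left mult.commute)
      also have "\<dots> \<le> (\<Sum>j=1..m. f j * u (m - j))"
        using less.IH f_nonneg by (intro sum_mono mult_left_mono) auto
      finally have "c \<le> exp (- s) * (\<Sum>j=1..m. f j * u (m - j))"
        by (simp add: exp_minus field_simps)
      also have "\<dots> \<le> u m"
        using pmf_tail_nonneg[of m] by (simp add: u_def f_def renewal_laplace_rec_weighted[of s m l])
      finally show ?thesis .
    qed
  qed
  then have "c * exp (- l * real m) \<le> renewal_laplace p s m" for m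
    by (simp add: u_def exp_minus field_simps)
  with c_pos show ?thesis by blast
qed

end

section \<open>Decay rate of the Laplace transform for small s\<close>

lemma abs_exp_minus_taylor2_le:
  fixes x :: real
  shows "\<bar>exp x - 1 - x - x^2/2\<bar> \<le> \<bar>x\<bar>^3 * exp \<bar>x\<bar> / 6"
proof -
  obtain t where t: "\<bar>t\<bar> \<le> \<bar>x\<bar>" "exp x = (\<Sum>m<3. x^m / fact m) + exp t / fact 3 * x^3"
    using Maclaurin_exp_le[of x 3] by blast
  have "(\<Sum>m<3. x^m / fact m) = 1 + x + x^2/2"
    by (simp add: numeral_3_eq_3 power2_eq_square)
  then have "exp x - 1 - x - x^2/2 = exp t / 6 * x^3"
    using t(2) by (simp add: numeral_3_eq_3)
  then have "\<bar>exp x - 1 - x - x^2/2\<bar> = exp t / 6 * \<bar>x\<bar>^3"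
    by (simp only: abs_mult power_abs) simp
  also have "\<dots> \<le> exp \<bar>x\<bar> / 6 * \<bar>x\<bar>^3"
    using t(1) by (intro mult_right_mono divide_right_mono) auto
  finally show ?thesis by (simp add: mult.commute)
qed

lemma cube_le_exp:
  fixes a x :: real
  assumes "0 < a" "0 \<le> x"
  shows "x^3 \<le> 27 / a^3 * exp (a * x)"
proof -
  have "a * x / 3 \<le> exp (a * x / 3)"
    using exp_ge_add_one_self[of "a * x / 3"] by linarith
  then have "(a * x / 3)^3 \<le> exp (a * x / 3)^3"
    using assms by (intro power_mono) auto
  also have "\<dots> = exp (a * x)"
    by (subst exp_of_nat_mult[symmetric]) simp
  finally show ?thesis
    using assms by (simp add: power_divide power_mult_distrib field_simps)
qed

lemma tendsto_at_top_of_LIMSEQ_div: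
  fixes f :: "nat \<Rightarrow> real"
  assumes lim: "(\<lambda>m. f m / real m) \<longlonglongrightarrow> L"
  shows "((\<lambda>t. f (nat (\<lceil>t\<rceil> - 1)) / t) \<longlongrightarrow> L) at_top"
proof -
  define g where "g t = nat (\<lceil>t\<rceil> - 1)" for t :: real
  have g_bounds: "t - 1 \<le> real (g t) \<and> real (g t) \<le> t" if "1 \<le> t" for t
    unfolding g_def using ceiling_correct[of t] that by linarith
  have "filterlim g sequentially at_top"
    unfolding filterlim_at_top
  proof
    fix Z :: nat
    have Z_le: "Z \<le> g t" if "real Z + 1 \<le> t" for t
      using g_bounds[of t] that by auto
    show "\<forall>\<^sub>F t in at_top. Z \<le> g t"
      using eventually_ge_at_top[of "real Z + 1"] by eventually_elim (rule Z_le)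
  qed
  then have "((\<lambda>t. f (g t) / real (g t)) \<longlongrightarrow> L) at_top"
    by (rule filterlim_compose[OF lim])
  moreover have "((\<lambda>t. real (g t) / t) \<longlongrightarrow> 1) at_top"
  proof (rule tendsto_sandwich)
    show "\<forall>\<^sub>F t in at_top. (t - 1) / t \<le> real (g t) / t"
      using eventually_ge_at_top[of "1::real"]
      by eventually_elim (use g_bounds in \<open>auto intro: divide_right_mono\<close>)
    show "\<forall>\<^sub>F t in at_top. real (g t) / t \<le> 1"
      using eventually_ge_at_top[of "1::real"] by eventually_elim (use g_bounds in auto)
    show "((\<lambda>t::real. (t - 1) / t) \<longlongrightarrow> 1) at_top" by real_asymp
  qed simp
  ultimately have "((\<lambda>t. f (g t) / real (g t) * (real (g t) / t)) \<longlongrightarrow> L * 1) at_top"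
    by (rule tendsto_mult)
  moreover have "\<forall>\<^sub>F t in at_top. f (g t) / real (g t) * (real (g t) / t) = f (g t) / t"
    using eventually_ge_at_top[of "2::real"]
  proof eventually_elim
    case (elim t)
    then have "real (g t) \<noteq> 0" using g_bounds[of t] by linarith
    then show ?case by simp
  qed
  ultimately show ?thesis
    unfolding g_def[symmetric] mult_1_right by (rule Lim_transform_eventually)
qed

locale exp_moment_pmf = renewal_pmf +
  fixes a :: real
  assumes a_pos: "0 < a" and summable_exp_moment: "summable (\<lambda>n. p n * exp (a * real n))"
begin

lemma summable_mgf:
  assumes "l \<le> a"
  shows "summable (\<lambda>n. p n * exp (l * real n))"
proof (rule summable_comparison_test'[OF summable_exp_moment])
  show "norm (p n * exp (l * real n)) \<le> p n * exp (a * real n)" for n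
    using p_nonneg[of n] assms by (auto intro!: mult_left_mono mult_right_mono)
qed

lemma summable_cube_mgf: "summable (\<lambda>n. p n * real n ^ 3 * exp (a / 2 * real n))"
proof (rule summable_comparison_test'[OF summable_mult[OF summable_exp_moment, of "27 / (a / 2)^3"]])
  fix n
  have "p n * real n ^ 3 * exp (a / 2 * real n) \<le> p n * (27 / (a / 2)^3 * exp (a / 2 * real n)) * exp (a / 2 * real n)"
    using p_nonneg[of n] a_pos cube_le_exp[of "a / 2" "real n"] by (intro mult_right_mono mult_left_mono) auto
  also have "\<dots> = 27 / (a / 2)^3 * (p n * exp (a * real n))"
    by (simp add: mult_ac exp_add[symmetric])
  finally show "norm (p n * real n ^ 3 * exp (a / 2 * real n)) \<le> 27 / (a / 2)^3 * (p n * exp (a * real n))"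
    using p_nonneg[of n] by simp
qed

lemma summable_moment:
  assumes "k \<le> 3"
  shows "summable (\<lambda>n. p n * real n ^ k)"
proof (rule summable_comparison_test'[OF summable_cube_mgf])
  fix n
  show "norm (p n * real n ^ k) \<le> p n * real n ^ 3 * exp (a / 2 * real n)"
  proof (cases "n = 0")
    case False
    have "real n ^ k \<le> real n ^ 3 * 1"
      using False assms by (simp add: power_increasing)
    also have "\<dots> \<le> real n ^ 3 * exp (a / 2 * real n)"
      using a_pos by (intro mult_left_mono) auto
    finally show ?thesis
      using p_nonneg[of n] by (simp add: abs_mult mult.assoc mult_left_mono)
  qed (simp add: p_0)
qed

lemma summable_mean: "summable (\<lambda>n. p n * real n)"
  using summable_moment[of 1] by simp

definition mean :: real where "mean = (\<Sum>n. p n * real n)"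
definition second_moment :: real where "second_moment = (\<Sum>n. p n * real n ^ 2)"
definition var :: real where "var = second_moment - mean^2"
definition taylor_const :: real where "taylor_const = (\<Sum>n. p n * real n ^ 3 * exp (a / 2 * real n)) / 6"

lemma mean_ge_1: "1 \<le> mean"
proof -
  have "p n \<le> p n * real n" for n
    using p_nonneg[of n] p_0 by (cases n) (auto simp: mult_le_cancel_left1)
  then have "suminf p \<le> mean"
    unfolding mean_def using summable_p summable_mean by (intro suminf_le) auto
  then show ?thesis using p_sums by (simp add: sums_iff)
qed

lemma pmf_mgf_0: "pmf_mgf p 0 = 1"
  using p_sums by (simp add: pmf_mgf_def sums_iff)

lemma pmf_mgf_mono:
  assumes "x \<le> y" "y \<le> a"
  shows "pmf_mgf p x \<le> pmf_mgf p y"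
  unfolding pmf_mgf_def using assms p_nonneg
  by (intro suminf_le summable_mgf mult_left_mono) (auto intro: mult_right_mono)

lemma pmf_mgf_taylor:
  assumes "\<bar>l\<bar> \<le> a / 2"
  shows "\<bar>pmf_mgf p l - 1 - mean * l - second_moment * l^2 / 2\<bar> \<le> taylor_const * \<bar>l\<bar>^3"
proof -
  define g where "g n = p n * (exp (l * real n) - 1 - l * real n - (l * real n)^2 / 2)" for n
  define b where "b n = \<bar>l\<bar>^3 / 6 * (p n * real n ^ 3 * exp (a / 2 * real n))" for n
  have "(\<lambda>n. p n * exp (l * real n) - p n - p n * real n * l - p n * real n ^ 2 * (l^2 / 2))
      sums (pmf_mgf p l - 1 - mean * l - second_moment * (l^2 / 2))"
    unfolding pmf_mgf_def mean_def second_moment_def using assms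
    by (intro sums_diff p_sums sums_mult2 summable_sums summable_mgf summable_mean summable_moment) auto
  moreover have "(\<lambda>n. p n * exp (l * real n) - p n - p n * real n * l - p n * real n ^ 2 * (l^2 / 2)) = g"
    by (simp add: g_def fun_eq_iff algebra_simps power_mult_distrib)
  ultimately have g_sums: "g sums (pmf_mgf p l - 1 - mean * l - second_moment * l^2 / 2)"
    by simp
  have g_le_b: "\<bar>g n\<bar> \<le> b n" for n
  proof -
    have "\<bar>g n\<bar> \<le> p n * (\<bar>l * real n\<bar>^3 * exp \<bar>l * real n\<bar> / 6)"
      unfolding g_def abs_mult[of "p n"] abs_of_nonneg[OF p_nonneg]
      by (intro mult_left_mono p_nonneg abs_exp_minus_taylor2_le)
    also have "\<dots> \<le> p n * (\<bar>l * real n\<bar>^3 * exp (a / 2 * real n) / 6)"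
      using p_nonneg[of n] mult_right_mono[OF assms, of "real n"]
      by (intro mult_left_mono divide_right_mono) (auto simp: abs_mult)
    also have "\<dots> = b n"
      by (simp add: b_def abs_mult power_mult_distrib)
    finally show ?thesis .
  qed
  have b_summable: "summable b"
    unfolding b_def by (intro summable_mult summable_cube_mgf)
  have g_abs_summable: "summable (\<lambda>n. \<bar>g n\<bar>)"
    by (rule summable_comparison_test'[OF b_summable]) (simp add: g_le_b)
  have "\<bar>suminf g\<bar> \<le> (\<Sum>n. \<bar>g n\<bar>)"
    by (rule summable_rabs[OF g_abs_summable])
  also have "\<dots> \<le> suminf b"
    by (rule suminf_le[OF g_le_b g_abs_summable b_summable])
  also have "suminf b = taylor_const * \<bar>l\<bar>^3"
    unfolding b_def taylor_const_def suminf_mult[OF summable_cube_mgf] by simp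
  finally show ?thesis
    using g_sums by (simp add: sums_iff)
qed

lemma mean_pos: "0 < mean"
  using mean_ge_1 by simp

definition decay_approx :: "real \<Rightarrow> real" where
  "decay_approx s = s / mean - var * s^2 / (2 * mean^3)"

lemma taylor_const_nonneg: "0 \<le> taylor_const"
  unfolding taylor_const_def using p_nonneg a_pos
  by (intro divide_nonneg_pos suminf_nonneg summable_cube_mgf) auto

lemma pmf_mgf_taylor_remainder_limit:
  assumes "(g \<longlongrightarrow> c) (at_right 0)"
  shows "((\<lambda>s. (pmf_mgf p (s * g s) - 1 - mean * (s * g s) - second_moment * (s * g s)^2 / 2) / s^2)
    \<longlongrightarrow> 0) (at_right 0)"
proof (rule Lim_null_comparison)
  define k where "k = \<bar>c\<bar> + 1"
  have k_pos: "0 < k" by (simp add: k_def add_nonneg_pos)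
  show "((\<lambda>s. taylor_const * k^3 * s) \<longlongrightarrow> 0) (at_right 0)"
    by (auto intro!: tendsto_eq_intros)
  have "\<forall>\<^sub>F s in at_right 0. \<bar>g s\<bar> < k"
    using order_tendstoD(2)[OF tendsto_rabs[OF assms]] by (simp add: k_def)
  moreover have "\<forall>\<^sub>F s in at_right 0. s \<in> {0<..<a / 2 / k}"
    using a_pos k_pos by (intro eventually_at_right_real) simp
  ultimately show "\<forall>\<^sub>F s in at_right 0.
      norm ((pmf_mgf p (s * g s) - 1 - mean * (s * g s) - second_moment * (s * g s)^2 / 2) / s^2)
      \<le> taylor_const * k^3 * s"
  proof eventually_elim
    case (elim s)
    then have s: "0 < s" "k * s \<le> a / 2" using k_pos by (auto simp: field_simps)
    have small: "\<bar>s * g s\<bar> \<le> k * s"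
      using elim s by (simp add: abs_mult mult.commute mult_left_mono)
    have "\<bar>pmf_mgf p (s * g s) - 1 - mean * (s * g s) - second_moment * (s * g s)^2 / 2\<bar>
        \<le> taylor_const * \<bar>s * g s\<bar>^3"
      using small s by (intro pmf_mgf_taylor) simp
    also have "\<dots> \<le> taylor_const * (k * s)^3"
      using small taylor_const_nonneg by (intro mult_left_mono power_mono) auto
    finally show ?case
      using s by (simp add: abs_divide divide_le_eq power2_eq_square power3_eq_cube algebra_simps)
  qed
qed

(* decay_approx is the second-order inverse of the Taylor polynomial of the moment generating
   function at exp s, so perturbing it by c s\<^sup>2 moves the mgf by mean * c * s\<^sup>2. *)
lemma pmf_mgf_perturbed_limit:
  "((\<lambda>s. (pmf_mgf p (decay_approx s + c * s^2) - exp s) / s^2) \<longlongrightarrow> mean * c) (at_right 0)"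
proof -
  define d where "d = c - var / (2 * mean^3)"
  define g where "g s = 1 / mean + d * s" for s
  define h where "h s = s * (second_moment * d / mean + second_moment * d^2 * s / 2)" for s
  define remainder where "remainder s =
    (pmf_mgf p (s * g s) - 1 - mean * (s * g s) - second_moment * (s * g s)^2 / 2) / s^2" for s
  have approx_eq: "decay_approx s + c * s^2 = s * g s" for s
    unfolding g_def decay_approx_def d_def using mean_pos by (simp add: field_simps power2_eq_square)
  have decomp: "(pmf_mgf p (s * g s) - exp s) / s^2
      = remainder s + ((1 + s + s^2/2 - exp s) / s^2 + mean * c + h s)" if "s \<noteq> 0" for s
  proof -
    have "1 + mean * (s * g s) + second_moment * (s * g s)^2 / 2 = 1 + s + s^2/2 + mean * c * s^2 + s^2 * h s"
      unfolding g_def h_def d_def var_def using mean_pos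
      by (simp add: field_simps power2_eq_square power3_eq_cube)
    moreover have "s^2 * remainder s
        = pmf_mgf p (s * g s) - 1 - mean * (s * g s) - second_moment * (s * g s)^2 / 2"
      unfolding remainder_def using that by simp
    ultimately have "pmf_mgf p (s * g s) - exp s
        = s^2 * remainder s + (1 + s + s^2/2 - exp s) + s^2 * (mean * c + h s)"
      by (simp add: algebra_simps)
    moreover have "(s^2 * X + Y + s^2 * Z) / s^2 = X + (Y / s^2 + Z)" for X Y Z :: real
      using that by (simp add: add_divide_distrib)
    ultimately show ?thesis by (simp only: add.assoc)
  qed
  have "(g \<longlongrightarrow> 1 / mean) (at_right 0)"
    unfolding g_def by (auto intro!: tendsto_eq_intros)
  then have "(remainder \<longlongrightarrow> 0) (at_right 0)"
    unfolding remainder_def by (rule pmf_mgf_taylor_remainder_limit)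
  moreover have "((\<lambda>s::real. (1 + s + s^2/2 - exp s) / s^2) \<longlongrightarrow> 0) (at_right 0)"
    by real_asymp
  moreover have "(h \<longlongrightarrow> 0) (at_right 0)"
    unfolding h_def using mean_pos by (auto intro!: tendsto_eq_intros)
  ultimately have "((\<lambda>s. remainder s + ((1 + s + s^2/2 - exp s) / s^2 + mean * c + h s))
      \<longlongrightarrow> 0 + (0 + mean * c + 0)) (at_right 0)"
    by (intro tendsto_intros)
  moreover have "\<forall>\<^sub>F s in at_right 0. remainder s + ((1 + s + s^2/2 - exp s) / s^2 + mean * c + h s)
      = (pmf_mgf p (s * g s) - exp s) / s^2"
    using eventually_at_right_less[of "0::real"] by eventually_elim (simp add: decomp)
  ultimately show ?thesis
    unfolding approx_eq by (simp add: Lim_transform_eventually)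
qed

lemma eventually_exp_lt_pmf_mgf_above:
  assumes "0 < e"
  shows "\<forall>\<^sub>F s in at_right 0. exp s < pmf_mgf p (decay_approx s + e * s^2)"
proof -
  have "0 < mean * e" using mean_pos assms by simp
  from order_tendstoD(1)[OF pmf_mgf_perturbed_limit this]
  show ?thesis
    using eventually_at_right_less[of "0::real"] by eventually_elim (simp add: zero_less_divide_iff)
qed

lemma eventually_pmf_mgf_below_lt_exp:
  assumes "0 < e"
  shows "\<forall>\<^sub>F s in at_right 0. pmf_mgf p (decay_approx s - e * s^2) < exp s"
proof -
  have "mean * (- e) < 0" using mean_pos assms by (simp add: mult_pos_neg)
  from order_tendstoD(2)[OF pmf_mgf_perturbed_limit this]
  show ?thesis
    using eventually_at_right_less[of "0::real"] by eventually_elim (simp add: divide_less_0_iff)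
qed

lemma eventually_decay_approx_bounds:
  assumes "0 < e"
  shows "\<forall>\<^sub>F s in at_right 0. 0 \<le> decay_approx s - e * s^2 \<and> decay_approx s + e * s^2 < a / 2"
proof -
  define h where "h s = 1 / mean - (var / (2 * mean^3) + e) * s" for s
  have "(h \<longlongrightarrow> 1 / mean) (at_right 0)"
    unfolding h_def using mean_pos by (auto intro!: tendsto_eq_intros)
  then have h_pos: "\<forall>\<^sub>F s in at_right 0. 0 < h s"
    by (rule order_tendstoD(1)) (use mean_pos in simp)
  have "((\<lambda>s. decay_approx s + e * s^2) \<longlongrightarrow> 0) (at_right 0)"
    unfolding decay_approx_def using mean_pos by (auto intro!: tendsto_eq_intros)
  then have small: "\<forall>\<^sub>F s in at_right 0. decay_approx s + e * s^2 < a / 2"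
    by (rule order_tendstoD(2)) (use a_pos in simp)
  show ?thesis
    using h_pos small eventually_at_right_less[of "0::real"]
  proof eventually_elim
    case (elim s)
    have "decay_approx s - e * s^2 = s * h s"
      unfolding decay_approx_def h_def using mean_pos
      by (simp add: field_simps power2_eq_square power3_eq_cube)
    then show ?case using elim by simp
  qed
qed

(* As the moment generating function is increasing, decay_rate s is the root \<lambda> of
   pmf_mgf p \<lambda> = exp s whenever that root lies below a / 2. *)
definition decay_rate :: "real \<Rightarrow> real" where
  "decay_rate s = Sup {l. 0 \<le> l \<and> l \<le> a / 2 \<and> pmf_mgf p l \<le> exp s}"

lemma decay_rate_ge:
  assumes "0 \<le> l" "l \<le> a / 2" "pmf_mgf p l \<le> exp s"
  shows "l \<le> decay_rate s"
  unfolding decay_rate_def using assms by (intro cSup_upper bdd_aboveI[of _ "a / 2"]) auto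

lemma decay_rate_nonneg: "0 \<le> s \<Longrightarrow> 0 \<le> decay_rate s"
  using decay_rate_ge[of 0 s] a_pos by (simp add: pmf_mgf_0)

lemma decay_rate_le:
  assumes "0 \<le> s" "l \<le> a" "exp s < pmf_mgf p l"
  shows "decay_rate s \<le> l"
  unfolding decay_rate_def
proof (rule cSup_least)
  show "{l. 0 \<le> l \<and> l \<le> a / 2 \<and> pmf_mgf p l \<le> exp s} \<noteq> {}"
    using assms(1) a_pos by (auto intro!: exI[of _ 0] simp: pmf_mgf_0)
  fix x
  assume x: "x \<in> {l. 0 \<le> l \<and> l \<le> a / 2 \<and> pmf_mgf p l \<le> exp s}"
  show "x \<le> l"
  proof (rule ccontr)
    assume "\<not> x \<le> l"
    then have "pmf_mgf p l \<le> pmf_mgf p x" using x a_pos by (intro pmf_mgf_mono) auto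
    then show False using x assms by auto
  qed
qed

lemma decay_rate_expansion: "((\<lambda>s. (decay_rate s - decay_approx s) / s^2) \<longlongrightarrow> 0) (at_right 0)"
proof (rule tendstoI)
  fix r :: real
  assume "0 < r"
  then have e: "0 < r / 2" by simp
  show "\<forall>\<^sub>F s in at_right 0. dist ((decay_rate s - decay_approx s) / s^2) 0 < r"
    using eventually_exp_lt_pmf_mgf_above[OF e] eventually_pmf_mgf_below_lt_exp[OF e]
      eventually_decay_approx_bounds[OF e] eventually_at_right_less[of "0::real"]
  proof eventually_elim
    case (elim s)
    have "0 \<le> r / 2 * s^2" using e by simp
    then have "decay_approx s - r / 2 * s^2 \<le> decay_rate s"
      using elim by (intro decay_rate_ge) auto
    moreover have "decay_rate s \<le> decay_approx s + r / 2 * s^2"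
      using elim a_pos by (intro decay_rate_le) auto
    ultimately have "\<bar>decay_rate s - decay_approx s\<bar> \<le> r / 2 * s^2"
      unfolding abs_le_iff by linarith
    then have "\<bar>decay_rate s - decay_approx s\<bar> / s^2 \<le> r / 2"
      using elim by (simp add: pos_divide_le_eq)
    then have "\<bar>decay_rate s - decay_approx s\<bar> / s^2 < r"
      using \<open>0 < r\<close> by linarith
    then show ?case by (simp add: dist_real_def abs_divide)
  qed
qed

lemma less_decay_rate_witness:
  assumes "0 \<le> s" "0 < e"
  shows "\<exists>l. 0 \<le> l \<and> l \<le> a / 2 \<and> pmf_mgf p l \<le> exp s \<and> decay_rate s - e < l"
proof -
  let ?S = "{l. 0 \<le> l \<and> l \<le> a / 2 \<and> pmf_mgf p l \<le> exp s}"
  have "decay_rate s - e < Sup ?S" using assms unfolding decay_rate_def by simp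
  moreover have "0 \<in> ?S"
    using assms a_pos by (simp add: pmf_mgf_0)
  moreover have "bdd_above ?S"
    by (rule bdd_aboveI[of _ "a / 2"]) auto
  ultimately show ?thesis
    using less_cSup_iff[of ?S] by blast
qed

lemma greater_decay_rate_witness:
  assumes s: "0 \<le> s" and e: "0 < e" and "l\<^sub>0 \<le> a / 2" "exp s < pmf_mgf p l\<^sub>0"
  shows "\<exists>l. l \<le> decay_rate s + e \<and> l \<le> a / 2 \<and> exp s < pmf_mgf p l"
proof (cases "decay_rate s + e \<le> a / 2")
  case True
  have "exp s < pmf_mgf p (decay_rate s + e)"
  proof (rule ccontr)
    assume "\<not> exp s < pmf_mgf p (decay_rate s + e)"
    then have "decay_rate s + e \<le> decay_rate s"
      using True decay_rate_nonneg[OF s] e by (intro decay_rate_ge) auto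
    then show False using e by simp
  qed
  with True show ?thesis by blast
next
  case False
  then have "pmf_mgf p l\<^sub>0 \<le> pmf_mgf p (a / 2)"
    using assms a_pos by (intro pmf_mgf_mono) auto
  with False assms show ?thesis by (intro exI[of _ "a / 2"]) auto
qed

lemma renewal_laplace_log_rate:
  assumes s: "0 \<le> s" and "l\<^sub>0 \<le> a / 2" "exp s < pmf_mgf p l\<^sub>0"
  shows "(\<lambda>m. ln (renewal_laplace p s m) / real m) \<longlonglongrightarrow> - decay_rate s"
proof (rule tendstoI)
  fix r :: real
  assume "0 < r"
  define e where "e = r / 3"
  have e: "0 < e" using \<open>0 < r\<close> by (simp add: e_def)
  obtain l\<^sub>1 where l\<^sub>1: "0 \<le> l\<^sub>1" "l\<^sub>1 \<le> a / 2" "pmf_mgf p l\<^sub>1 \<le> exp s" "decay_rate s - e < l\<^sub>1"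
    using less_decay_rate_witness[OF s e] by blast
  obtain l where l: "l \<le> decay_rate s + e" "l \<le> a / 2" "exp s < pmf_mgf p l"
    using greater_decay_rate_witness[OF s e assms(2,3)] by blast
  have upper: "renewal_laplace p s m \<le> exp s * exp (- l\<^sub>1 * real m)" for m
    using l\<^sub>1 a_pos by (intro renewal_laplace_le_exp summable_mgf) auto
  obtain c where c: "0 < c" "\<And>m. c * exp (- l * real m) \<le> renewal_laplace p s m"
    using renewal_laplace_ge_const_exp[OF s summable_mgf l(3)] l a_pos by auto
  show "\<forall>\<^sub>F m in sequentially. dist (ln (renewal_laplace p s m) / real m) (- decay_rate s) < r"
    using order_tendstoD(2)[OF lim_const_over_n[of s] e]
      order_tendstoD(1)[OF lim_const_over_n[of "ln c"], of "- e", OF neg_less_0_iff_less[THEN iffD2, OF e]]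
      eventually_gt_at_top[of "0::nat"]
  proof eventually_elim
    case (elim m)
    have pos: "0 < renewal_laplace p s m" using renewal_laplace_pos[OF s] .
    have "ln (renewal_laplace p s m) \<le> ln (exp s * exp (- l\<^sub>1 * real m))"
      using upper[of m] pos by simp
    then have "ln (renewal_laplace p s m) \<le> s - l\<^sub>1 * real m"
      by (simp add: ln_mult)
    then have up: "ln (renewal_laplace p s m) / real m \<le> s / real m - l\<^sub>1"
      using elim by (simp add: field_simps)
    have "ln (c * exp (- l * real m)) \<le> ln (renewal_laplace p s m)"
      using c(2)[of m] c(1) pos by simp
    then have "ln c - l * real m \<le> ln (renewal_laplace p s m)"
      using c(1) by (simp add: ln_mult)
    then have "(ln c - l * real m) / real m \<le> ln (renewal_laplace p s m) / real m"
      using elim by (intro divide_right_mono) auto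
    then have lo: "ln c / real m - l \<le> ln (renewal_laplace p s m) / real m"
      using elim by (simp add: diff_divide_distrib)
    show ?case
      using up lo elim l l\<^sub>1 e_def unfolding dist_real_def abs_less_iff by linarith
  qed
qed

lemma effective_capacity_expansion:
  fixes R :: real and E :: "real \<Rightarrow> real \<Rightarrow> real"
  assumes R: "0 < R"
    and E_eq: "\<And>\<theta> t. 0 < \<theta> \<Longrightarrow> 0 < t \<Longrightarrow> E \<theta> t = renewal_laplace p (\<theta> * R) (nat (\<lceil>t\<rceil> - 1))"
  shows "\<exists>Ce :: real \<Rightarrow> real.
     (\<forall>\<^sub>F \<theta> in at_right 0. ((\<lambda>t. - ln (E \<theta> t) / (\<theta> * t)) \<longlongrightarrow> Ce \<theta>) at_top) \<and>
     ((\<lambda>\<theta>. (Ce \<theta> - (R / mean - R^2 * var / (2 * mean ^ 3) * \<theta>)) / \<theta>) \<longlongrightarrow> 0) (at_right 0)"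
proof (intro exI conjI)
  have scale: "filterlim (\<lambda>\<theta>. \<theta> * R) (at_right 0) (at_right 0)"
    using filterlim_times_pos[OF filterlim_ident R, of 0 0] by (simp add: mult.commute)
  have "\<forall>\<^sub>F s in at_right 0. 0 < s \<and> exp s < pmf_mgf p (decay_approx s + s^2) \<and> decay_approx s + s^2 < a / 2"
    using eventually_at_right_less[of "0::real"] eventually_exp_lt_pmf_mgf_above[OF zero_less_one]
      eventually_decay_approx_bounds[OF zero_less_one]
    by eventually_elim auto
  from eventually_compose_filterlim[OF this scale]
  show "\<forall>\<^sub>F \<theta> in at_right 0.
      ((\<lambda>t. - ln (E \<theta> t) / (\<theta> * t)) \<longlongrightarrow> decay_rate (\<theta> * R) / \<theta>) at_top"
    using eventually_at_right_less[of "0::real"]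
  proof eventually_elim
    case (elim \<theta>)
    have "(\<lambda>m. ln (renewal_laplace p (\<theta> * R) m) / real m) \<longlonglongrightarrow> - decay_rate (\<theta> * R)"
      using elim by (intro renewal_laplace_log_rate) auto
    from tendsto_mult_left[OF tendsto_at_top_of_LIMSEQ_div[OF this], of "- 1 / \<theta>"]
    have "((\<lambda>t. - 1 / \<theta> * (ln (renewal_laplace p (\<theta> * R) (nat (\<lceil>t\<rceil> - 1))) / t))
        \<longlongrightarrow> decay_rate (\<theta> * R) / \<theta>) at_top"
      by simp
    moreover have "\<forall>\<^sub>F t in at_top. - 1 / \<theta> * (ln (renewal_laplace p (\<theta> * R) (nat (\<lceil>t\<rceil> - 1))) / t)
        = - ln (E \<theta> t) / (\<theta> * t)"
      using eventually_gt_at_top[of "0::real"] by eventually_elim (use elim in \<open>simp add: E_eq\<close>)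
    ultimately show ?case by (rule Lim_transform_eventually)
  qed
  have "((\<lambda>\<theta>. R^2 * ((decay_rate (\<theta> * R) - decay_approx (\<theta> * R)) / (\<theta> * R)^2)) \<longlongrightarrow> R^2 * 0) (at_right 0)"
    by (intro tendsto_mult_left filterlim_compose[OF decay_rate_expansion scale])
  moreover have "\<forall>\<^sub>F \<theta> in at_right 0.
      R^2 * ((decay_rate (\<theta> * R) - decay_approx (\<theta> * R)) / (\<theta> * R)^2)
      = (decay_rate (\<theta> * R) / \<theta> - (R / mean - R^2 * var / (2 * mean ^ 3) * \<theta>)) / \<theta>"
    using eventually_at_right_less[of "0::real"]
    by eventually_elim (use R mean_pos in \<open>simp add: decay_approx_def field_simps power2_eq_square power3_eq_cube\<close>)
  ultimately show "((\<lambda>\<theta>. (decay_rate (\<theta> * R) / \<theta> - (R / mean - R^2 * var / (2 * mean ^ 3) * \<theta>)) / \<theta>)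
      \<longlongrightarrow> 0) (at_right 0)"
    by (simp add: Lim_transform_eventually)
qed

end

section \<open>The renewal counting process\<close>

lemma measurable_Greatest_nat[measurable]:
  fixes P :: "nat \<Rightarrow> 'a \<Rightarrow> bool"
  assumes [measurable]: "\<And>i. Measurable.pred M (P i)"
  shows "(\<lambda>x. GREATEST i. P i x) \<in> measurable M (count_space UNIV)"
  unfolding measurable_count_space_eq2_countable
proof safe
  fix n :: nat
  let ?has_max = "\<lambda>x. \<exists>k. P k x \<and> (\<forall>i>k. \<not> P i x)"
  define junk where "junk = (GREATEST i::nat. False)"
  have no_max: "(GREATEST i. P i x) = junk" if "\<not> ?has_max x" for x
  proof -
    have "(\<lambda>k. P k x \<and> (\<forall>y. P y x \<longrightarrow> y \<le> k)) = (\<lambda>k. False \<and> (\<forall>y. False \<longrightarrow> y \<le> k))"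
      using that by (auto simp: fun_eq_iff not_le)
    then show ?thesis unfolding Greatest_def junk_def by simp
  qed
  have Greatest_eq_iff: "(GREATEST i. P i x) = n
      \<longleftrightarrow> (if ?has_max x then P n x \<and> (\<forall>i>n. \<not> P i x) else junk = n)" for x
  proof (cases "?has_max x")
    case True
    then obtain k where k: "P k x" "\<forall>i>k. \<not> P i x" by blast
    then have "(GREATEST i. P i x) = k"
      by (intro Greatest_equality) (auto simp: not_less[symmetric])
    moreover have "P n x \<and> (\<forall>i>n. \<not> P i x) \<longleftrightarrow> n = k"
      using k by (meson linorder_neqE_nat)
    ultimately show ?thesis using True by auto
  next
    case False
    show ?thesis by (simp only: no_max[OF False] if_not_P[OF False])
  qed
  have "(\<lambda>x. GREATEST i. P i x) -` {n} \<inter> space M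
      = {x\<in>space M. if ?has_max x then P n x \<and> (\<forall>i>n. \<not> P i x) else junk = n}"
    by (rule set_eqI) (simp only: Int_iff vimage_eq singleton_iff mem_Collect_eq Greatest_eq_iff conj_commute)
  also have "\<dots> \<in> sets M" by measurable
  finally show "(\<lambda>x. GREATEST i. P i x) -` {n} \<inter> space M \<in> sets M" .
qed simp

lemma real_less_iff_le_ceiling_pred:
  assumes "0 < t"
  shows "real n < t \<longleftrightarrow> n \<le> nat (\<lceil>t\<rceil> - 1)"
proof -
  have "real n < t \<longleftrightarrow> int n < \<lceil>t\<rceil>" using less_ceiling_iff[of "int n" t] by simp
  also have "\<dots> \<longleftrightarrow> n \<le> nat (\<lceil>t\<rceil> - 1)" using assms by linarith
  finally show ?thesis .
qed

lemma le_sum_of_pos: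
  fixes f :: "nat \<Rightarrow> nat"
  assumes "\<And>l. 1 \<le> l \<Longrightarrow> 0 < f l"
  shows "k \<le> (\<Sum>l=1..k. f l)"
  using assms sum_mono[of "{1..k}" "\<lambda>_. 1" f] by (simp add: Suc_le_eq)

lemma le_renewal_count_iff:
  fixes Tl :: "nat \<Rightarrow> 'a \<Rightarrow> nat"
  assumes pos: "\<And>l. 1 \<le> l \<Longrightarrow> 0 < Tl l \<omega>" and t: "0 < t"
  shows "k \<le> renewal_count Tl t \<omega> \<longleftrightarrow> real (\<Sum>l=1..k. Tl l \<omega>) < t"
proof -
  define S where "S k = (\<Sum>l=1..k. Tl l \<omega>)" for k
  have S_mono: "S i \<le> S j" if "i \<le> j" for i j
    unfolding S_def using that by (intro sum_mono2) auto
  have S_ge: "i \<le> S i" for i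
    unfolding S_def using pos by (rule le_sum_of_pos)
  have bound: "i \<le> nat \<lceil>t\<rceil>" if "real (S i) < t" for i
    using S_ge[of i] that by linarith
  have N: "renewal_count Tl t \<omega> = (GREATEST i. real (S i) < t)"
    by (simp add: renewal_count_def S_def)
  show ?thesis
  proof
    assume "k \<le> renewal_count Tl t \<omega>"
    moreover have "real (S (renewal_count Tl t \<omega>)) < t"
      unfolding N by (rule GreatestI_nat[where k = 0 and b = "nat \<lceil>t\<rceil>"]) (use t bound in \<open>auto simp: S_def\<close>)
    ultimately show "real (\<Sum>l=1..k. Tl l \<omega>) < t"
      using S_mono unfolding S_def by (meson of_nat_le_iff order.strict_trans1)
  next
    assume "real (\<Sum>l=1..k. Tl l \<omega>) < t"
    then show "k \<le> renewal_count Tl t \<omega>"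
      unfolding N by (intro Greatest_le_nat[where b = "nat \<lceil>t\<rceil>"]) (auto simp: S_def bound)
  qed
qed

lemma exp_renewal_count_eq_sum:
  fixes Tl :: "nat \<Rightarrow> 'a \<Rightarrow> nat"
  assumes pos: "\<And>l. 1 \<le> l \<Longrightarrow> 0 < Tl l \<omega>" and t: "0 < t"
  shows "exp (- s * real (renewal_count Tl t \<omega>))
    = (\<Sum>k\<le>nat (\<lceil>t\<rceil> - 1). exp (- s * real k) *
        (of_bool ((\<Sum>l=1..k. Tl l \<omega>) \<le> nat (\<lceil>t\<rceil> - 1)) - of_bool ((\<Sum>l=1..Suc k. Tl l \<omega>) \<le> nat (\<lceil>t\<rceil> - 1))))"
proof -
  define m where "m = nat (\<lceil>t\<rceil> - 1)"
  define N where "N = renewal_count Tl t \<omega>"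
  have le_N: "(\<Sum>l=1..k. Tl l \<omega>) \<le> m \<longleftrightarrow> k \<le> N" for k
    using le_renewal_count_iff[of Tl \<omega> t k, OF pos t] real_less_iff_le_ceiling_pred[OF t]
    unfolding N_def m_def by blast
  have "N \<le> (\<Sum>l=1..N. Tl l \<omega>)"
    using pos by (rule le_sum_of_pos)
  also have "\<dots> \<le> m"
    using le_N by simp
  finally have "N \<le> m" .
  moreover have "exp (- s * real k) * (of_bool (k \<le> N) - of_bool (Suc k \<le> N))
      = (if k = N then exp (- s * real k) else 0)" for k
    by auto
  ultimately show ?thesis
    unfolding m_def[symmetric] N_def[symmetric] le_N by (simp add: sum.delta')
qed

context prob_space
begin

lemma AE_pos_if_prob_eq_0:
  assumes "X \<in> measurable M (count_space UNIV)" "prob {\<omega>\<in>space M. X \<omega> = (0::nat)} = 0"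
  shows "AE \<omega> in M. 0 < X \<omega>"
proof -
  have "{\<omega>\<in>space M. X \<omega> = 0} \<in> events" using assms(1) by measurable
  with assms(2) have "AE \<omega> in M. X \<omega> \<noteq> 0"
    by (subst AE_iff_measurable[OF _ refl]) (auto simp: emeasure_eq_measure)
  then show ?thesis by eventually_elim simp
qed

lemma prob_nat_rv_sums:
  assumes "X \<in> measurable M (count_space UNIV)"
  shows "(\<lambda>n::nat. prob {\<omega>\<in>space M. X \<omega> = n}) sums 1"
proof -
  define A where "A n = {\<omega>\<in>space M. X \<omega> = n}" for n
  have "A n \<in> events" for n using assms unfolding A_def by measurable
  then have "range A \<subseteq> events" by auto
  moreover have "disjoint_family A" unfolding A_def disjoint_family_on_def by auto
  ultimately have "(\<lambda>n. prob (A n)) sums prob (\<Union>n. A n)"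
    by (rule measure_UNION) (simp_all add: emeasure_eq_measure)
  moreover have "(\<Union>n. A n) = space M" unfolding A_def by auto
  ultimately show ?thesis by (simp add: A_def prob_space)
qed

lemma expectation_nat_rv:
  fixes g :: "nat \<Rightarrow> real"
  assumes X: "X \<in> measurable M (count_space UNIV)" and g: "\<And>n. 0 \<le> g n"
    and summable: "summable (\<lambda>n. g n * prob {\<omega>\<in>space M. X \<omega> = n})"
  shows "integrable M (\<lambda>\<omega>. g (X \<omega>))"
    and "expectation (\<lambda>\<omega>. g (X \<omega>)) = (\<Sum>n. g n * prob {\<omega>\<in>space M. X \<omega> = n})"
proof -
  define A where "A n = {\<omega>\<in>space M. X \<omega> = n}" for n
  have A_events: "A n \<in> events" for n unfolding A_def using X by measurable
  have "ennreal (g (X \<omega>)) = (\<Sum>n. ennreal (g n) * indicator (A n) \<omega>)" if "\<omega> \<in> space M" for \<omega>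
  proof -
    have "(\<lambda>n. ennreal (g n) * indicator (A n) \<omega>) = (\<lambda>n. if n = X \<omega> then ennreal (g n) else 0)"
      using that unfolding A_def by (auto simp: indicator_def)
    then show ?thesis using sums_single[of "X \<omega>" "\<lambda>n. ennreal (g n)"] by (simp add: sums_iff)
  qed
  then have "(\<integral>\<^sup>+\<omega>. ennreal (g (X \<omega>)) \<partial>M) = (\<integral>\<^sup>+\<omega>. (\<Sum>n. ennreal (g n) * indicator (A n) \<omega>) \<partial>M)"
    by (intro nn_integral_cong) simp
  also have "\<dots> = (\<Sum>n. ennreal (g n * prob (A n)))"
    using A_events
    by (simp add: nn_integral_suminf nn_integral_cmult_indicator emeasure_eq_measure ennreal_mult g)
  also have "\<dots> = ennreal (\<Sum>n. g n * prob (A n))"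
    using summable g unfolding A_def by (intro suminf_ennreal2) auto
  finally have "has_bochner_integral M (\<lambda>\<omega>. g (X \<omega>)) (\<Sum>n. g n * prob (A n))"
    using X g summable unfolding A_def
    by (intro has_bochner_integral_nn_integral suminf_nonneg) (auto simp: measurable_compose)
  then show "integrable M (\<lambda>\<omega>. g (X \<omega>))"
    and "expectation (\<lambda>\<omega>. g (X \<omega>)) = (\<Sum>n. g n * prob {\<omega>\<in>space M. X \<omega> = n})"
    unfolding A_def by (auto simp: has_bochner_integral_iff)
qed

lemma prob_partial_sum_le_eq_conv_cdf:
  fixes Tl :: "nat \<Rightarrow> 'a \<Rightarrow> nat"
  assumes Tl_measurable: "\<And>l. 1 \<le> l \<Longrightarrow> Tl l \<in> measurable M (count_space UNIV)"
    and indep: "indep_vars (\<lambda>_. count_space UNIV) Tl {1..}"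
    and Tl_pmf: "\<And>l n. 1 \<le> l \<Longrightarrow> prob {\<omega>\<in>space M. Tl l \<omega> = n} = p n"
  shows "prob {\<omega>\<in>space M. (\<Sum>l=1..k. Tl l \<omega>) \<le> m} = conv_cdf p k m"
proof (induction k arbitrary: m)
  case 0
  then show ?case by (simp add: prob_space)
next
  case (Suc k)
  define X where "X l \<omega> = real (Tl l \<omega>)" for l \<omega>
  define S where "S \<omega> = (\<Sum>l=1..k. Tl l \<omega>)" for \<omega>
  have X_measurable[measurable]: "X l \<in> borel_measurable M" if "1 \<le> l" for l
    unfolding X_def using Tl_measurable[OF that] by measurable
  have S_le: "S \<omega> \<le> j \<longleftrightarrow> (\<Sum>l\<in>{1..k}. X l \<omega>) \<le> real j" for \<omega> j
    unfolding S_def X_def by (simp flip: of_nat_sum)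
  have S_events: "{\<omega>\<in>space M. S \<omega> \<le> j} \<in> events" for j
    unfolding S_le by measurable
  have "indep_vars (\<lambda>_. borel) X (insert (Suc k) {1..k})"
    unfolding X_def by (rule indep_vars_subset[OF indep_vars_compose2[OF indep]]) auto
  then have indep_last: "indep_var borel (X (Suc k)) borel (\<lambda>\<omega>. \<Sum>l\<in>{1..k}. X l \<omega>)"
    by (rule indep_vars_sum[rotated 2]) auto
  define B where "B j = {\<omega>\<in>space M. Tl (Suc k) \<omega> = j \<and> S \<omega> \<le> m - j}" for j
  have B_events: "B j \<in> events" for j
    unfolding B_def S_le X_def[symmetric] using Tl_measurable[of "Suc k"] by measurable
  have prob_B: "prob (B j) = p j * conv_cdf p k (m - j)" for j
  proof -
    have "prob (B j) = \<P>(\<omega> in M. X (Suc k) \<omega> \<in> {real j} \<and> (\<Sum>l\<in>{1..k}. X l \<omega>) \<in> {..real (m - j)})"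
      unfolding B_def S_le by (auto simp: X_def intro!: arg_cong[where f = prob])
    also have "\<dots> = \<P>(\<omega> in M. X (Suc k) \<omega> \<in> {real j}) * \<P>(\<omega> in M. (\<Sum>l\<in>{1..k}. X l \<omega>) \<in> {..real (m - j)})"
      by (rule prob_indep_random_variable[OF indep_last]) auto
    also have "{\<omega>\<in>space M. X (Suc k) \<omega> \<in> {real j}} = {\<omega>\<in>space M. Tl (Suc k) \<omega> = j}"
      by (auto simp: X_def)
    also have "{\<omega>\<in>space M. (\<Sum>l\<in>{1..k}. X l \<omega>) \<in> {..real (m - j)}} = {\<omega>\<in>space M. S \<omega> \<le> m - j}"
      by (auto simp: S_le)
    also have "prob {\<omega>\<in>space M. Tl (Suc k) \<omega> = j} * prob {\<omega>\<in>space M. S \<omega> \<le> m - j} = p j * conv_cdf p k (m - j)"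
      using Tl_pmf[of "Suc k" j] Suc.IH[of "m - j"] by (simp add: S_def)
    finally show ?thesis .
  qed
  have "prob {\<omega>\<in>space M. (\<Sum>l=1..Suc k. Tl l \<omega>) \<le> m} = prob (\<Union>j\<le>m. B j)"
    by (rule arg_cong[where f = prob]) (auto simp: B_def S_def)
  also have "\<dots> = (\<Sum>j\<le>m. prob (B j))"
    using B_events by (intro measure_finite_Union) (auto simp: disjoint_family_on_def B_def)
  finally show ?case by (simp add: prob_B)
qed

lemma expectation_of_bool:
  assumes "{\<omega>\<in>space M. P \<omega>} \<in> events"
  shows "expectation (\<lambda>\<omega>. of_bool (P \<omega>) :: real) = prob {\<omega>\<in>space M. P \<omega>}"
proof -
  have "expectation (\<lambda>\<omega>. of_bool (P \<omega>) :: real) = expectation (indicator {\<omega>\<in>space M. P \<omega>})"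
    by (intro Bochner_Integration.integral_cong) auto
  then show ?thesis using assms by simp
qed

lemma expectation_exp_renewal_count:
  fixes Tl :: "nat \<Rightarrow> 'a \<Rightarrow> nat"
  assumes Tl_measurable: "\<And>l. 1 \<le> l \<Longrightarrow> Tl l \<in> measurable M (count_space UNIV)"
    and indep: "indep_vars (\<lambda>_. count_space UNIV) Tl {1..}"
    and Tl_pmf: "\<And>l n. 1 \<le> l \<Longrightarrow> prob {\<omega>\<in>space M. Tl l \<omega> = n} = p n"
    and p_0: "p 0 = 0" and t: "0 < t"
  shows "expectation (\<lambda>\<omega>. exp (- s * real (renewal_count Tl t \<omega>))) = renewal_laplace p s (nat (\<lceil>t\<rceil> - 1))"
proof -
  define m where "m = nat (\<lceil>t\<rceil> - 1)"
  define S where "S k \<omega> = (\<Sum>l=1..k. Tl l \<omega>)" for k \<omega>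
  define N where "N \<omega> = renewal_count Tl t \<omega>" for \<omega>
  have S_measurable[measurable]: "S k \<in> measurable M (count_space UNIV)" for k
    unfolding S_def using Tl_measurable by (intro measurable_sum_nat) auto
  have S_events: "{\<omega>\<in>space M. S k \<omega> \<le> j} \<in> events" for k j
    by measurable
  have N_measurable: "N \<in> measurable M (count_space UNIV)"
    unfolding N_def renewal_count_def S_def[symmetric] by measurable
  have "AE \<omega> in M. 0 < Tl l \<omega>" if "1 \<le> l" for l
    using Tl_measurable[OF that] Tl_pmf[OF that] p_0 by (intro AE_pos_if_prob_eq_0) auto
  then have pos: "AE \<omega> in M. \<forall>l. 1 \<le> l \<longrightarrow> 0 < Tl l \<omega>"
    by (subst AE_all_countable) (auto intro: AE_I2)
  have "AE \<omega> in M. exp (- s * real (N \<omega>))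
      = (\<Sum>k\<le>m. exp (- s * real k) * (of_bool (S k \<omega> \<le> m) - of_bool (S (Suc k) \<omega> \<le> m)))"
    using pos unfolding S_def N_def m_def
    by eventually_elim (rule exp_renewal_count_eq_sum[OF _ t], simp)
  then have "expectation (\<lambda>\<omega>. exp (- s * real (N \<omega>)))
      = expectation (\<lambda>\<omega>. \<Sum>k\<le>m. exp (- s * real k) * (of_bool (S k \<omega> \<le> m) - of_bool (S (Suc k) \<omega> \<le> m)))"
    using N_measurable by (intro integral_cong_AE) auto
  also have "\<dots> = (\<Sum>k\<le>m. exp (- s * real k) * (conv_cdf p k m - conv_cdf p (Suc k) m))"
  proof -
    have integrable: "integrable M (\<lambda>\<omega>. of_bool (S k \<omega> \<le> m) :: real)" for k
      by (rule integrable_const_bound[where B = 1]) auto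
    have "expectation (\<lambda>\<omega>. of_bool (S k \<omega> \<le> m) :: real) = prob {\<omega>\<in>space M. S k \<omega> \<le> m}" for k
      by (rule expectation_of_bool[OF S_events])
    also have "prob {\<omega>\<in>space M. S k \<omega> \<le> m} = conv_cdf p k m" for k
      unfolding S_def by (rule prob_partial_sum_le_eq_conv_cdf[OF Tl_measurable indep Tl_pmf])
    finally show ?thesis by (simp add: integrable)
  qed
  finally show ?thesis by (simp add: renewal_laplace_def N_def m_def)
qed

lemma prob_eq_if_distr_eq:
  assumes "X \<in> measurable M (count_space UNIV)" "Y \<in> measurable M (count_space UNIV)"
    and "distr M (count_space UNIV) X = distr M (count_space UNIV) Y"
  shows "prob {\<omega>\<in>space M. X \<omega> = n} = prob {\<omega>\<in>space M. Y \<omega> = n}"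
proof -
  have "prob {\<omega>\<in>space M. Z \<omega> = n} = measure (distr M (count_space UNIV) Z) {n}"
    if "Z \<in> measurable M (count_space UNIV)" for Z :: "'a \<Rightarrow> 'b"
    using that by (subst measure_distr) (auto intro!: arg_cong[where f = prob])
  then show ?thesis using assms by simp
qed

lemma expectation_variance_nat_rv:
  assumes X: "X \<in> measurable M (count_space UNIV)"
    and "exp_moment_pmf (\<lambda>n. prob {\<omega>\<in>space M. X \<omega> = n}) a"
  shows "expectation (\<lambda>\<omega>. real (X \<omega>)) = exp_moment_pmf.mean (\<lambda>n. prob {\<omega>\<in>space M. X \<omega> = n})"
    and "variance (\<lambda>\<omega>. real (X \<omega>)) = exp_moment_pmf.var (\<lambda>n. prob {\<omega>\<in>space M. X \<omega> = n})"
proof -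
  interpret Q: exp_moment_pmf "\<lambda>n. prob {\<omega>\<in>space M. X \<omega> = n}" a by fact
  have "summable (\<lambda>n. real n * prob {\<omega>\<in>space M. X \<omega> = n})"
    using Q.summable_mean by (simp add: mult.commute)
  from expectation_nat_rv[OF X _ this]
  have int1: "integrable M (\<lambda>\<omega>. real (X \<omega>))" and E1: "expectation (\<lambda>\<omega>. real (X \<omega>)) = Q.mean"
    by (simp_all add: Q.mean_def mult.commute)
  have "summable (\<lambda>n. (real n)^2 * prob {\<omega>\<in>space M. X \<omega> = n})"
    using Q.summable_moment[of 2] by (simp add: mult.commute)
  from expectation_nat_rv[OF X _ this]
  have int2: "integrable M (\<lambda>\<omega>. (real (X \<omega>))^2)" and E2: "expectation (\<lambda>\<omega>. (real (X \<omega>))^2) = Q.second_moment"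
    by (simp_all add: Q.second_moment_def mult.commute)
  show "expectation (\<lambda>\<omega>. real (X \<omega>)) = Q.mean" by (rule E1)
  show "variance (\<lambda>\<omega>. real (X \<omega>)) = Q.var"
    using variance_eq[OF int1 int2] E1 E2 by (simp add: Q.var_def)
qed

end

section \<open>Transmission times of HARQ with incremental redundancy\<close>

lemma summable_exp_moment_of_geometric_tail:
  fixes p :: "nat \<Rightarrow> real"
  assumes p_nonneg: "\<And>n. 0 \<le> p n" and \<rho>: "0 < \<rho>" "\<rho> < 1"
    and tail: "\<And>n. p (Suc n) \<le> C * \<rho> ^ n"
  shows "summable (\<lambda>n. p n * exp (- ln \<rho> / 2 * real n))"
proof -
  define q where "q = exp (ln \<rho> / 2)"
  have q: "0 < q" "q < 1" using \<rho> by (auto simp: q_def)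
  have "p (Suc n) * exp (- ln \<rho> / 2 * real (Suc n)) \<le> C * exp (- ln \<rho> / 2) * q ^ n" for n
  proof -
    have "p (Suc n) * exp (- ln \<rho> / 2 * real (Suc n)) \<le> C * \<rho> ^ n * exp (- ln \<rho> / 2 * real (Suc n))"
      by (intro mult_right_mono tail) simp
    also have "\<rho> ^ n = exp (real n * ln \<rho>)"
      using \<rho> by (simp add: exp_of_nat_mult)
    also have "C * exp (real n * ln \<rho>) * exp (- ln \<rho> / 2 * real (Suc n)) = C * exp (- ln \<rho> / 2) * q ^ n"
      unfolding q_def by (simp add: mult.assoc exp_add[symmetric] flip: exp_of_nat_mult) (simp add: algebra_simps)
    finally show ?thesis .
  qed
  then have "summable (\<lambda>n. p (Suc n) * exp (- ln \<rho> / 2 * real (Suc n)))"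
    using p_nonneg q
    by (intro summable_comparison_test'[OF summable_mult[OF summable_geometric[of q]]]) auto
  then show ?thesis by (subst summable_Suc_iff[symmetric])
qed

lemma blockcap_nonneg: "0 < SNR \<Longrightarrow> 0 \<le> x \<Longrightarrow> 0 \<le> blockcap SNR x"
  unfolding blockcap_def by (simp add: add_pos_nonneg)

lemma blockcap_measurable[measurable]: "blockcap SNR \<in> borel_measurable borel"
  unfolding blockcap_def by measurable

lemma sum_blockcap_le_if_less_harq_time:
  assumes "1 \<le> m" "m < harq_time SNR R z \<omega>"
  shows "(\<Sum>i=1..m. blockcap SNR (z i \<omega>)) \<le> R"
  using not_less_Least[OF assms(2)[unfolded harq_time_def]] assms(1) by simp

locale harq_channel = prob_space +
  fixes SNR R :: real and z :: "nat \<Rightarrow> 'a \<Rightarrow> real"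
  assumes SNR_pos: "0 < SNR" and R_pos: "0 < R"
    and z_indep: "indep_vars (\<lambda>_. borel) z {1..}"
    and z_ident: "\<And>i. 1 \<le> i \<Longrightarrow> distr M borel (z i) = distr M borel (z 1)"
    and z_nonneg: "\<And>i. 1 \<le> i \<Longrightarrow> AE \<omega> in M. 0 \<le> z i \<omega>"
    and decodable: "AE \<omega> in M. \<exists>m\<ge>1. R < (\<Sum>i=1..m. blockcap SNR (z i \<omega>))"
begin

lemma z_measurable[measurable]: "1 \<le> i \<Longrightarrow> z i \<in> borel_measurable M"
  using z_indep unfolding indep_vars_def by auto

lemma measurable_harq_time[measurable]: "harq_time SNR R z \<in> measurable M (count_space UNIV)"
proof -
  have "(\<lambda>\<omega>. \<Sum>j=1..i. blockcap SNR (z j \<omega>)) \<in> borel_measurable M" for i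
    by (intro borel_measurable_sum) auto
  then show ?thesis
    unfolding harq_time_def by measurable
qed

lemma AE_harq_time_ge_1: "AE \<omega> in M. 1 \<le> harq_time SNR R z \<omega>"
  using decodable by eventually_elim (unfold harq_time_def, rule LeastI2_ex, auto)

definition exp_neg_cap :: "nat \<Rightarrow> 'a \<Rightarrow> real" where
  "exp_neg_cap i \<omega> = exp (- blockcap SNR (z i \<omega>))"

lemma exp_neg_cap_measurable[measurable]: "1 \<le> i \<Longrightarrow> exp_neg_cap i \<in> borel_measurable M"
  unfolding exp_neg_cap_def by measurable

lemma AE_exp_neg_cap_bounds:
  assumes "1 \<le> i"
  shows "AE \<omega> in M. 0 < exp_neg_cap i \<omega> \<and> exp_neg_cap i \<omega> \<le> 1"
  using z_nonneg[OF assms] by eventually_elim (simp add: exp_neg_cap_def blockcap_nonneg[OF SNR_pos])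

lemma AE_all_exp_neg_cap_bounds: "AE \<omega> in M. \<forall>i. 1 \<le> i \<longrightarrow> 0 < exp_neg_cap i \<omega> \<and> exp_neg_cap i \<omega> \<le> 1"
  using AE_exp_neg_cap_bounds by (subst AE_all_countable) (auto intro: AE_I2)

lemma integrable_exp_neg_cap:
  assumes "1 \<le> i"
  shows "integrable M (exp_neg_cap i)"
proof (rule integrable_const_bound[where B = 1])
  show "AE \<omega> in M. norm (exp_neg_cap i \<omega>) \<le> 1"
    using AE_exp_neg_cap_bounds[OF assms] by eventually_elim auto
qed (use assms in measurable)

lemma expectation_exp_neg_cap: "1 \<le> i \<Longrightarrow> expectation (exp_neg_cap i) = expectation (exp_neg_cap 1)"
proof -
  assume i: "1 \<le> i"
  have "expectation (exp_neg_cap i) = integral\<^sup>L (distr M borel (z i)) (\<lambda>x. exp (- blockcap SNR x))"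
    unfolding exp_neg_cap_def using i by (subst integral_distr) auto
  also have "\<dots> = expectation (exp_neg_cap 1)"
    unfolding exp_neg_cap_def using i by (subst z_ident[OF i], subst integral_distr) auto
  finally show ?thesis .
qed

(* Otherwise every block capacity vanishes almost surely and no message is ever decoded. *)
lemma expectation_exp_neg_cap_less_1: "expectation (exp_neg_cap 1) < 1"
proof (rule ccontr)
  assume "\<not> expectation (exp_neg_cap 1) < 1"
  have "AE \<omega> in M. exp_neg_cap i \<omega> = 1" if i: "1 \<le> i" for i
  proof -
    have nonneg: "AE \<omega> in M. 0 \<le> 1 - exp_neg_cap i \<omega>"
      using AE_exp_neg_cap_bounds[OF i] by eventually_elim simp
    have "expectation (\<lambda>\<omega>. 1 - exp_neg_cap i \<omega>) = 1 - expectation (exp_neg_cap 1)"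
      using integrable_exp_neg_cap[OF i] expectation_exp_neg_cap[OF i] by (simp add: prob_space)
    moreover have "0 \<le> expectation (\<lambda>\<omega>. 1 - exp_neg_cap i \<omega>)"
      using nonneg by (rule integral_nonneg_AE)
    ultimately have "expectation (\<lambda>\<omega>. 1 - exp_neg_cap i \<omega>) = 0"
      using \<open>\<not> expectation (exp_neg_cap 1) < 1\<close> by simp
    then have "AE \<omega> in M. 1 - exp_neg_cap i \<omega> = 0"
      using integral_nonneg_eq_0_iff_AE[OF _ nonneg] integrable_exp_neg_cap[OF i] by simp
    then show ?thesis by eventually_elim simp
  qed
  then have "AE \<omega> in M. \<forall>i. 1 \<le> i \<longrightarrow> exp_neg_cap i \<omega> = 1"
    by (subst AE_all_countable) (auto intro: AE_I2)
  then have "AE \<omega> in M. False"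
    using decodable
  proof eventually_elim
    case (elim \<omega>)
    then obtain m where "1 \<le> m" "R < (\<Sum>i=1..m. blockcap SNR (z i \<omega>))" by blast
    moreover have "blockcap SNR (z i \<omega>) = 0" if "i \<in> {1..m}" for i
      using elim that by (auto simp: exp_neg_cap_def)
    ultimately show False using R_pos by simp
  qed
  then show False by (simp add: AE_False)
qed

(* Chernoff bound: T > m means C\<^sub>1 + ... + C\<^sub>m \<le> R. *)
lemma prob_less_harq_time_le:
  "prob {\<omega>\<in>space M. m < harq_time SNR R z \<omega>} \<le> exp R * expectation (exp_neg_cap 1) ^ m"
proof (cases "m = 0")
  case True
  then show ?thesis using R_pos by (simp add: order_trans[OF prob_le_1])
next
  case False
  have indep: "indep_vars (\<lambda>_. borel) exp_neg_cap {1..m}"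
    unfolding exp_neg_cap_def
    by (rule indep_vars_subset[OF indep_vars_compose2[OF z_indep]]) auto
  have prod_measurable[measurable]: "(\<lambda>\<omega>. \<Prod>i\<in>{1..m}. exp_neg_cap i \<omega>) \<in> borel_measurable M"
    by (intro borel_measurable_prod) auto
  have prod_nonneg: "AE \<omega> in M. 0 \<le> (\<Prod>i\<in>{1..m}. exp_neg_cap i \<omega>)"
    using AE_all_exp_neg_cap_bounds by eventually_elim (force intro!: prod_nonneg)
  have prod_ge: "exp (- R) \<le> (\<Prod>i\<in>{1..m}. exp_neg_cap i \<omega>)" if "m < harq_time SNR R z \<omega>" for \<omega>
  proof -
    have "(\<Sum>i=1..m. blockcap SNR (z i \<omega>)) \<le> R"
      by (rule sum_blockcap_le_if_less_harq_time) (use False that in simp_all)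
    then have "exp (- R) \<le> exp (- (\<Sum>i=1..m. blockcap SNR (z i \<omega>)))"
      by simp
    also have "\<dots> = (\<Prod>i\<in>{1..m}. exp_neg_cap i \<omega>)"
      unfolding exp_neg_cap_def by (simp add: exp_sum flip: sum_negf)
    finally show ?thesis .
  qed
  have "prob {\<omega>\<in>space M. m < harq_time SNR R z \<omega>} \<le> prob {\<omega>\<in>space M. exp (- R) \<le> (\<Prod>i\<in>{1..m}. exp_neg_cap i \<omega>)}"
    by (rule finite_measure_mono) (use prod_ge in auto)
  also have "\<dots> \<le> expectation (\<lambda>\<omega>. \<Prod>i\<in>{1..m}. exp_neg_cap i \<omega>) / exp (- R)"
  proof (rule integral_Markov_inequality_measure[OF _ sets.top prod_nonneg])
    show "integrable M (\<lambda>\<omega>. \<Prod>i\<in>{1..m}. exp_neg_cap i \<omega>)"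
      using indep_vars_integrable[OF _ indep] integrable_exp_neg_cap by simp
  qed simp
  also have "expectation (\<lambda>\<omega>. \<Prod>i\<in>{1..m}. exp_neg_cap i \<omega>) = (\<Prod>i\<in>{1..m}. expectation (exp_neg_cap i))"
    using indep_vars_lebesgue_integral[OF _ indep] integrable_exp_neg_cap by simp
  also have "\<dots> = (\<Prod>i\<in>{1..m}. expectation (exp_neg_cap 1))"
    by (rule prod.cong[OF refl expectation_exp_neg_cap]) simp
  also have "\<dots> = expectation (exp_neg_cap 1) ^ m"
    by simp
  also have "expectation (exp_neg_cap 1) ^ m / exp (- R) = exp R * expectation (exp_neg_cap 1) ^ m"
    by (simp add: exp_minus field_simps)
  finally show ?thesis .
qed

lemma exp_moment_pmf_harq_time: "\<exists>a. exp_moment_pmf (\<lambda>n. prob {\<omega>\<in>space M. harq_time SNR R z \<omega> = n}) a"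
proof -
  define p where "p n = prob {\<omega>\<in>space M. harq_time SNR R z \<omega> = n}" for n
  define \<rho> where "\<rho> = max (expectation (exp_neg_cap 1)) (1 / 2)"
  have \<rho>: "0 < \<rho>" "\<rho> < 1" using expectation_exp_neg_cap_less_1 by (auto simp: \<rho>_def)
  have exp_neg_cap_nonneg: "0 \<le> expectation (exp_neg_cap 1)"
    using AE_exp_neg_cap_bounds[of 1] by (intro integral_nonneg_AE) (auto elim: AE_mp)
  have "p 0 = 0"
  proof -
    have "{\<omega>\<in>space M. harq_time SNR R z \<omega> = 0} \<in> events" by measurable
    moreover have "AE \<omega> in M. harq_time SNR R z \<omega> \<noteq> 0"
      using AE_harq_time_ge_1 by eventually_elim simp
    ultimately show ?thesis
      unfolding p_def by (subst (asm) AE_iff_measurable[OF _ refl]) (auto simp: emeasure_eq_measure)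
  qed
  moreover have p_sums: "p sums 1"
    unfolding p_def by (rule prob_nat_rv_sums[OF measurable_harq_time])
  moreover have tail: "p (Suc n) \<le> exp R * \<rho> ^ n" for n
  proof -
    have "p (Suc n) \<le> prob {\<omega>\<in>space M. n < harq_time SNR R z \<omega>}"
      unfolding p_def by (intro finite_measure_mono) auto
    also have "\<dots> \<le> exp R * expectation (exp_neg_cap 1) ^ n"
      by (rule prob_less_harq_time_le)
    also have "\<dots> \<le> exp R * \<rho> ^ n"
      using exp_neg_cap_nonneg by (intro mult_left_mono power_mono) (auto simp: \<rho>_def)
    finally show ?thesis .
  qed
  ultimately have "exp_moment_pmf p (- ln \<rho> / 2)"
    using \<rho> summable_exp_moment_of_geometric_tail[OF _ \<rho> tail]
    by unfold_locales (auto simp: p_def)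
  then show ?thesis unfolding p_def by blast
qed

end

theorem theorem1:
  fixes M :: "'a measure" and SNR R :: real
    and z :: "nat \<Rightarrow> 'a \<Rightarrow> real" and Tl :: "nat \<Rightarrow> 'a \<Rightarrow> nat"
  assumes P: "prob_space M"
    and SNR: "SNR > 0" and R: "R > 0"
    and z_indep: "prob_space.indep_vars M (\<lambda>_. borel) z {1..}"
    and z_ident: "\<And>i. i \<ge> 1 \<Longrightarrow> distr M borel (z i) = distr M borel (z 1)"
    and z_nonneg: "\<And>i. i \<ge> 1 \<Longrightarrow> AE \<omega> in M. z i \<omega> \<ge> 0"
    and T_finite: "AE \<omega> in M. \<exists>m\<ge>1. R < (\<Sum>i=1..m. blockcap SNR (z i \<omega>))"
    and Tl_indep: "prob_space.indep_vars M (\<lambda>_. count_space UNIV) Tl {1..}"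
    and Tl_ident: "\<And>l. l \<ge> 1 \<Longrightarrow>
        distr M (count_space UNIV) (Tl l) = distr M (count_space UNIV) (harq_time SNR R z)"
  shows "\<exists>Ce :: real \<Rightarrow> real.
     (\<forall>\<^sub>F \<theta> in at_right 0.
        ((\<lambda>t. - ln (prob_space.expectation M
                        (\<lambda>\<omega>. exp (- \<theta> * R * real (renewal_count Tl t \<omega>)))) / (\<theta> * t))
          \<longlongrightarrow> Ce \<theta>) at_top) \<and>
     ((\<lambda>\<theta>. (Ce \<theta> - (R / prob_space.expectation M (\<lambda>\<omega>. real (harq_time SNR R z \<omega>))
        - R\<^sup>2 * prob_space.variance M (\<lambda>\<omega>. real (harq_time SNR R z \<omega>))
          / (2 * (prob_space.expectation M (\<lambda>\<omega>. real (harq_time SNR R z \<omega>))) ^ 3) * \<theta>)) / \<theta>)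
      \<longlongrightarrow> 0) (at_right 0)"
proof -
  interpret harq_channel M SNR R z
    by (intro harq_channel.intro harq_channel_axioms.intro P)
      (fact SNR R z_indep z_ident z_nonneg T_finite)+
  define p where "p = (\<lambda>n. prob {\<omega>\<in>space M. harq_time SNR R z \<omega> = n})"
  obtain a where pmf: "exp_moment_pmf p a"
    using exp_moment_pmf_harq_time unfolding p_def by blast
  interpret exp_moment_pmf p a by (rule pmf)
  have Tl_measurable: "Tl l \<in> measurable M (count_space UNIV)" if "1 \<le> l" for l
    using Tl_indep that unfolding indep_vars_def by auto
  have Tl_pmf: "prob {\<omega>\<in>space M. Tl l \<omega> = n} = p n" if "1 \<le> l" for l n
    unfolding p_def using that Tl_ident
    by (intro prob_eq_if_distr_eq Tl_measurable measurable_harq_time) auto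
  have laplace: "expectation (\<lambda>\<omega>. exp (- \<theta> * R * real (renewal_count Tl t \<omega>)))
      = renewal_laplace p (\<theta> * R) (nat (\<lceil>t\<rceil> - 1))" if "0 < \<theta>" "0 < t" for \<theta> t
    using expectation_exp_renewal_count[OF Tl_measurable Tl_indep Tl_pmf p_0 \<open>0 < t\<close>, of "\<theta> * R"]
    by simp
  have "expectation (\<lambda>\<omega>. real (harq_time SNR R z \<omega>)) = mean"
    and "variance (\<lambda>\<omega>. real (harq_time SNR R z \<omega>)) = var"
    using expectation_variance_nat_rv[OF measurable_harq_time pmf[unfolded p_def]]
    unfolding p_def[symmetric] by simp_all
  then show ?thesis
    using effective_capacity_expansion[OF R laplace] by simp
qed

end
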